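(* Let $\psi:[0,\infty)\to(-\infty,0]$ be a monotonically increasing (non-decreasing) function and let $p$ be a seminorm on the locally convex space $E$ over $K$. Then the function $\phi:E\to\mathbb R$, $\phi(x)=\psi(p(x))$, is convex.
   Context: $K$ is a field complete with respect to a non-trivial non-archimedean absolute value, $B_K=\{x\in K:|x|\le1\}$. Seminorms are non-archimedean: $p(x+y)\le\max(p(x),p(y))$ and $p(\lambda x)=|\lambda|p(x)$. A function $\phi:E\to\mathbb R$ is convex if for all $n$, $x_1,\dots,x_n\in E$ and $\lambda_1,\dots,\lambda_n\in B_K$ with $\sum\lambda_i=1$ one has $\phi(\sum\lambda_ix_i)\le\max_i|\lambda_i|\phi(x_i)$. *)

theory Defs
  imports Complex_Main
begin

definition nonarch_abs :: "('k::field \<Rightarrow> real) \<Rightarrow> bool" where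
  "nonarch_abs av \<longleftrightarrow>
     (\<forall>x. av x \<ge> 0) \<and> (\<forall>x. av x = 0 \<longleftrightarrow> x = 0) \<and>
     (\<forall>x y. av (x * y) = av x * av y) \<and>
     (\<forall>x y. av (x + y) \<le> max (av x) (av y))"

definition nontrivial_abs :: "('k::field \<Rightarrow> real) \<Rightarrow> bool" where
  "nontrivial_abs av \<longleftrightarrow> (\<exists>x. av x \<noteq> 0 \<and> av x \<noteq> 1)"

definition complete_abs :: "('k::field \<Rightarrow> real) \<Rightarrow> bool" where
  "complete_abs av \<longleftrightarrow>
     (\<forall>f :: nat \<Rightarrow> 'k.
        (\<forall>e>0. \<exists>N. \<forall>m\<ge>N. \<forall>n\<ge>N. av (f m - f n) < e) \<longrightarrow>
        (\<exists>l. \<forall>e>0. \<exists>N. \<forall>n\<ge>N. av (f n - l) < e))"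

definition na_seminorm ::
  "('k::field \<Rightarrow> real) \<Rightarrow> ('k \<Rightarrow> 'e::ab_group_add \<Rightarrow> 'e) \<Rightarrow> ('e \<Rightarrow> real) \<Rightarrow> bool" where
  "na_seminorm av scale p \<longleftrightarrow>
     (\<forall>x. p x \<ge> 0) \<and>
     (\<forall>x y. p (x + y) \<le> max (p x) (p y)) \<and>
     (\<forall>c x. p (scale c x) = av c * p x)"

definition na_convex ::
  "('k::field \<Rightarrow> real) \<Rightarrow> ('k \<Rightarrow> 'e::ab_group_add \<Rightarrow> 'e) \<Rightarrow> ('e \<Rightarrow> real) \<Rightarrow> bool" where
  "na_convex av scale \<phi> \<longleftrightarrow>
     (\<forall>(n::nat) (x::nat \<Rightarrow> 'e) (l::nat \<Rightarrow> 'k).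
        n \<ge> 1 \<longrightarrow> (\<forall>i<n. av (l i) \<le> 1) \<longrightarrow> (\<Sum>i<n. l i) = 1 \<longrightarrow>
        \<phi> (\<Sum>i<n. scale (l i) (x i)) \<le> (MAX i\<in>{..<n}. av (l i) * \<phi> (x i)))"

end

theory Submission
  imports Defs
begin

text \<open>By the ultrametric inequality, p of a convex combination \<Sum> \<lambda>_i x_i is at most
  p(\<lambda>_j x_j) \<le> p(x_j) for a single index j. Monotonicity of \<psi> transfers this to \<psi> \<circ> p,
  and since \<psi> \<le> 0, multiplying \<psi>(p(x_j)) by |\<lambda>_j| \<le> 1 can only increase it.
  Completeness and nontriviality of the absolute value play no role.\<close>

lemma ultrametric_sum_le_term:
  fixes p :: "'e::comm_monoid_add \<Rightarrow> real"
  assumes ultra: "\<forall>x y. p (x + y) \<le> max (p x) (p y)"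
    and "finite A" and "A \<noteq> {}"
  shows "\<exists>j\<in>A. p (\<Sum>i\<in>A. z i) \<le> p (z j)"
  using assms(2,3)
proof (induction A rule: finite_ne_induct)
  case (singleton a)
  then show ?case by simp
next
  case (insert a A)
  then obtain j where "j \<in> A" "p (\<Sum>i\<in>A. z i) \<le> p (z j)"
    by blast
  moreover have "p (\<Sum>i\<in>insert a A. z i) \<le> max (p (z a)) (p (\<Sum>i\<in>A. z i))"
    using insert.hyps ultra by simp
  ultimately show ?case
    by (metis insertCI max_def order_trans)
qed

lemma na_seminorm_scale_le:
  assumes "nonarch_abs av" and "na_seminorm av scale p" and "av c \<le> 1"
  shows "p (scale c x) \<le> p x"
proof -
  have "av c \<ge> 0" "p x \<ge> 0" "p (scale c x) = av c * p x"
    using assms(1,2) unfolding nonarch_abs_def na_seminorm_def by blast+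
  then show ?thesis
    using assms(3) by (simp add: mult_left_le_one_le)
qed

theorem mainTheorem7:
  fixes av :: "'k::field \<Rightarrow> real"
    and scale :: "'k \<Rightarrow> 'e::ab_group_add \<Rightarrow> 'e"
    and p :: "'e \<Rightarrow> real"
    and \<psi> :: "real \<Rightarrow> real"
  assumes "nonarch_abs av" and "nontrivial_abs av" and "complete_abs av"
    and "vector_space scale"
    and "na_seminorm av scale p"
    and "mono_on {0..} \<psi>" and "\<forall>t\<ge>0. \<psi> t \<le> 0"
  shows "na_convex av scale (\<lambda>x. \<psi> (p x))"
  unfolding na_convex_def
proof (intro allI impI)
  fix n :: nat and x :: "nat \<Rightarrow> 'e" and l :: "nat \<Rightarrow> 'k"
  assume "n \<ge> 1" and l: "\<forall>i<n. av (l i) \<le> 1" and "(\<Sum>i<n. l i) = 1"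
  have p_nonneg: "\<And>y. p y \<ge> 0" and ultra: "\<forall>y z. p (y + z) \<le> max (p y) (p z)"
    using assms(5) unfolding na_seminorm_def by blast+
  have "{..<n} \<noteq> {}"
    using \<open>n \<ge> 1\<close> by (simp add: lessThan_empty_iff)
  then obtain j where j: "j < n"
    and j_max: "p (\<Sum>i<n. scale (l i) (x i)) \<le> p (scale (l j) (x j))"
    using ultrametric_sum_le_term[OF ultra, of "{..<n}"] by blast
  note j_max
  also have "\<dots> \<le> p (x j)"
    using na_seminorm_scale_le[OF assms(1,5)] l j by blast
  finally have "\<psi> (p (\<Sum>i<n. scale (l i) (x i))) \<le> \<psi> (p (x j))"
    using assms(6) p_nonneg by (auto simp: mono_on_def)
  also have "\<dots> \<le> av (l j) * \<psi> (p (x j))"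
  proof -
    have "\<psi> (p (x j)) \<le> 0" and "av (l j) \<le> 1"
      using assms(7) p_nonneg l j by auto
    then show ?thesis
      by (simp add: mult_le_cancel_right1)
  qed
  also have "\<dots> \<le> (MAX i\<in>{..<n}. av (l i) * \<psi> (p (x i)))"
    using j by (intro Max_ge) auto
  finally show "\<psi> (p (\<Sum>i<n. scale (l i) (x i))) \<le> (MAX i\<in>{..<n}. av (l i) * \<psi> (p (x i)))" .
qed

end
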